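(* Let $\bm A\in\mathbb{R}^{n\times n}$ be a graph adjacency matrix as in the context, and let $\bm M\in\{0,1\}^{n\times d}$ be a fixed (non-random) mask matrix such that every column $j$ contains at least one observed entry, i.e. $S_j:=\{1\le k\le n : \bm M_{k,j}=1\}\neq\emptyset$. Let $\bm X\in\mathbb{R}^{n\times d}$ be a random matrix whose entries $\bm X_{i,j}$ are independent and identically distributed with $\mathbb{E}(\bm X_{i,j})=0$ and $\mathrm{Var}(\bm X_{i,j})=1$. Define the imputed matrix $\hat{\bm X}\in\mathbb{R}^{n\times d}$ by $\hat{\bm X}_{i,j}=\bm X_{i,j}$ if $\bm M_{i,j}=1$, and, if $\bm M_{i,j}=0$, by $$\hat{\bm X}_{i,j}=\sum_{k\in S_j}\alpha^{(i,j)}_k\,\bm X_{k,j},$$ where for each missing position $(i,j)$ the weights $\alpha^{(i,j)}_k$ are fixed (non-random) real numbers with $\alpha^{(i,j)}_k\ge 0$ and $\sum_{k\in S_j}\alpha^{(i,j)}_k=1$ (i.e. each missing entry is filled by a convex combination of observed entries of the same column). Then $$\mathbb{E}\big[E_D(\hat{\bm X})\big]\le \mathbb{E}\big[E_D(\bm X)\big].$$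
   Context: A graph on $n$ nodes is given by an adjacency matrix $\bm A\in\mathbb{R}^{n\times n}$ that is symmetric, has nonnegative entries and zero diagonal. $\bm D$ is the diagonal degree matrix with $\bm D_{i,i}=\sum_j \bm A_{i,j}$. Set $\tilde{\bm A}=\bm A+\bm I_n$, $\tilde{\bm D}=\bm D+\bm I_n$, and the augmented normalized Laplacian $\tilde{\Delta}=\bm I_n-\tilde{\bm D}^{-1/2}\tilde{\bm A}\tilde{\bm D}^{-1/2}$. For a feature matrix $\bm X\in\mathbb{R}^{n\times d}$ (row $i$ = features of node $i$), the graph Dirichlet energy is $$E_D(\bm X)=\mathrm{tr}\big(\bm X^T\tilde{\Delta}\bm X\big)=\frac12\sum_{i,j=1}^n \bm A_{i,j}\Big\|\frac{\bm X_{i,:}}{\sqrt{1+\bm D_{i,i}}}-\frac{\bm X_{j,:}}{\sqrt{1+\bm D_{j,j}}}\Big\|^2,$$ with $\|\cdot\|$ the Euclidean norm. A mask matrix $\bm M\in\{0,1\}^{n\times d}$ indicates that entry $\bm X_{i,j}$ is observed iff $\bm M_{i,j}=1$. *)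

theory Defs
  imports "HOL-Probability.Probability"
begin

text \<open>Nodes are indexed by 0..<n, feature columns by 0..<d.
  An adjacency matrix is a function A :: nat => nat => real (entries A i j, i,j < n).\<close>

definition is_adjacency :: "nat \<Rightarrow> (nat \<Rightarrow> nat \<Rightarrow> real) \<Rightarrow> bool" where
  "is_adjacency n A \<longleftrightarrow>
     (\<forall>i<n. \<forall>j<n. A i j = A j i) \<and> (\<forall>i<n. \<forall>j<n. 0 \<le> A i j) \<and> (\<forall>i<n. A i i = 0)"

definition degree :: "nat \<Rightarrow> (nat \<Rightarrow> nat \<Rightarrow> real) \<Rightarrow> nat \<Rightarrow> real" where
  "degree n A i = (\<Sum>j<n. A i j)"

definition dirichlet_energy ::
    "nat \<Rightarrow> nat \<Rightarrow> (nat \<Rightarrow> nat \<Rightarrow> real) \<Rightarrow> (nat \<Rightarrow> nat \<Rightarrow> real) \<Rightarrow> real" where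
  "dirichlet_energy n d A X =
     1/2 * (\<Sum>i<n. \<Sum>j<n. A i j *
        (\<Sum>l<d. (X i l / sqrt (1 + degree n A i) - X j l / sqrt (1 + degree n A j))\<^sup>2))"

definition obs_set :: "nat \<Rightarrow> (nat \<Rightarrow> nat \<Rightarrow> bool) \<Rightarrow> nat \<Rightarrow> nat set" where
  "obs_set n Mk j = {k. k < n \<and> Mk k j}"

definition imputed ::
    "nat \<Rightarrow> (nat \<Rightarrow> nat \<Rightarrow> bool) \<Rightarrow> (nat \<Rightarrow> nat \<Rightarrow> nat \<Rightarrow> real) \<Rightarrow> (nat \<Rightarrow> nat \<Rightarrow> real)
     \<Rightarrow> nat \<Rightarrow> nat \<Rightarrow> real" where
  "imputed n Mk alpha X i j =
     (if Mk i j then X i j else (\<Sum>k\<in>obs_set n Mk j. alpha i j k * X k j))"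

end

theory Submission
  imports Defs
begin

text \<open>Every entry of the imputed matrix, like every entry of X itself, is a fixed linear
  combination of the entries of its column. The entries of a column are orthonormal in L2
  (independent, mean 0, variance 1), so E[(\<Sum>k. c k * X k l)^2] = \<Sum>k. (c k)^2 and the expected
  energy depends only on the weights. For an edge (i, j) and a column, X has the unit weight
  vectors e_i, e_j, contributing 1/s_i^2 + 1/s_j^2 with s_i = sqrt (1 + D_ii); the imputed matrix
  has probability weight vectors u, v, and \<Sum>k. (u_k/s_i - v_k/s_j)^2 \<le> 1/s_i^2 + 1/s_j^2 because
  u_k^2 \<le> u_k, v_k^2 \<le> v_k and the cross terms are nonnegative.\<close>

definition orthonormal :: "'a measure \<Rightarrow> ('i \<Rightarrow> 'a \<Rightarrow> real) \<Rightarrow> 'i set \<Rightarrow> bool" where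
  "orthonormal M Y K \<longleftrightarrow>
     (\<forall>k\<in>K. \<forall>m\<in>K. integrable M (\<lambda>\<omega>. Y k \<omega> * Y m \<omega>) \<and>
        integral\<^sup>L M (\<lambda>\<omega>. Y k \<omega> * Y m \<omega>) = (if k = m then 1 else 0))"

lemma (in prob_space) orthonormal_if_indep_standardized:
  assumes indep: "indep_vars (\<lambda>_. borel) Y I"
    and int: "\<And>i. i \<in> I \<Longrightarrow> integrable M (Y i)"
    and sq_int: "\<And>i. i \<in> I \<Longrightarrow> integrable M (\<lambda>\<omega>. (Y i \<omega>)\<^sup>2)"
    and mean0: "\<And>i. i \<in> I \<Longrightarrow> expectation (Y i) = 0"
    and var1: "\<And>i. i \<in> I \<Longrightarrow> variance (Y i) = 1"
  shows "orthonormal M Y I"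
  unfolding orthonormal_def
proof (intro ballI)
  fix k m assume km: "k \<in> I" "m \<in> I"
  show "integrable M (\<lambda>\<omega>. Y k \<omega> * Y m \<omega>) \<and>
        expectation (\<lambda>\<omega>. Y k \<omega> * Y m \<omega>) = (if k = m then 1 else 0)"
  proof (cases "k = m")
    case True
    then show ?thesis using sq_int[of m] var1[of m] mean0[of m] km
      by (simp add: power2_eq_square)
  next
    case False
    have ind: "indep_vars (\<lambda>_. borel) Y {k, m}"
      by (rule indep_vars_subset[OF indep]) (use km in auto)
    have int_km: "\<And>i. i \<in> {k, m} \<Longrightarrow> integrable M (Y i)" using int km by auto
    have prod: "(\<lambda>\<omega>. \<Prod>i\<in>{k, m}. Y i \<omega>) = (\<lambda>\<omega>. Y k \<omega> * Y m \<omega>)" using False by simp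
    have "integrable M (\<lambda>\<omega>. \<Prod>i\<in>{k, m}. Y i \<omega>)"
      by (rule indep_vars_integrable[OF _ ind int_km]) auto
    moreover have "expectation (\<lambda>\<omega>. \<Prod>i\<in>{k, m}. Y i \<omega>) = (\<Prod>i\<in>{k, m}. expectation (Y i))"
      by (rule indep_vars_lebesgue_integral[OF _ ind int_km]) auto
    ultimately show ?thesis using False prod mean0 km by simp
  qed
qed

lemma orthonormal_reindex:
  assumes "orthonormal M Y I" "inj_on f K" "f ` K \<subseteq> I"
  shows "orthonormal M (\<lambda>k. Y (f k)) K"
  using assms unfolding orthonormal_def inj_on_def by (auto simp: subset_iff)

lemma square_sum_eq_double_sum:
  fixes g :: "'i \<Rightarrow> real"
  shows "(\<Sum>k\<in>K. g k)\<^sup>2 = (\<Sum>k\<in>K. \<Sum>m\<in>K. g k * g m)"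
  by (simp add: power2_eq_square sum_product)

lemma integrable_square_orthonormal_comb:
  assumes "orthonormal M Y K"
  shows "integrable M (\<lambda>\<omega>. (\<Sum>k\<in>K. c k * Y k \<omega>)\<^sup>2)"
  using assms unfolding square_sum_eq_double_sum orthonormal_def
  by (auto simp: mult_ac intro!: Bochner_Integration.integrable_sum integrable_mult_right)

lemma integral_square_orthonormal_comb:
  assumes ortho: "orthonormal M Y K" and "finite K"
  shows "integral\<^sup>L M (\<lambda>\<omega>. (\<Sum>k\<in>K. c k * Y k \<omega>)\<^sup>2) = (\<Sum>k\<in>K. (c k)\<^sup>2)"
proof -
  have term_int: "integrable M (\<lambda>\<omega>. c k * Y k \<omega> * (c m * Y m \<omega>))" if "k \<in> K" "m \<in> K" for k m
    using ortho that unfolding orthonormal_def by (auto simp: mult_ac intro: integrable_mult_right)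
  have "integral\<^sup>L M (\<lambda>\<omega>. (\<Sum>k\<in>K. c k * Y k \<omega>)\<^sup>2)
      = (\<Sum>k\<in>K. \<Sum>m\<in>K. integral\<^sup>L M (\<lambda>\<omega>. c k * Y k \<omega> * (c m * Y m \<omega>)))"
    unfolding square_sum_eq_double_sum using term_int
    by (simp add: Bochner_Integration.integral_sum Bochner_Integration.integrable_sum
        integral_mult_right_zero integrable_mult_right)
  also have "\<dots> = (\<Sum>k\<in>K. \<Sum>m\<in>K. c k * c m * (if k = m then 1 else 0))"
    using ortho unfolding orthonormal_def by (intro sum.cong refl) (simp add: mult_ac)
  also have "\<dots> = (\<Sum>k\<in>K. (c k)\<^sup>2)"
    using \<open>finite K\<close> by (simp add: if_distrib power2_eq_square cong: if_cong)
  finally show ?thesis .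
qed

lemma integral_dirichlet_energy_orthonormal_columns:
  fixes X :: "nat \<Rightarrow> nat \<Rightarrow> 'a \<Rightarrow> real" and W :: "nat \<Rightarrow> nat \<Rightarrow> nat \<Rightarrow> real"
  assumes ortho: "\<And>l. l < d \<Longrightarrow> orthonormal M (\<lambda>k. X k l) {..<n}"
    and Z: "\<And>\<omega> i l. i < n \<Longrightarrow> l < d \<Longrightarrow> Z \<omega> i l = (\<Sum>k<n. W i l k * X k l \<omega>)"
  shows "integral\<^sup>L M (\<lambda>\<omega>. dirichlet_energy n d A (Z \<omega>)) =
     1/2 * (\<Sum>i<n. \<Sum>j<n. A i j * (\<Sum>l<d. \<Sum>k<n.
        (W i l k / sqrt (1 + degree n A i) - W j l k / sqrt (1 + degree n A j))\<^sup>2))"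
proof -
  define V where "V i j l k = W i l k / sqrt (1 + degree n A i) - W j l k / sqrt (1 + degree n A j)"
    for i j l k
  have energy: "dirichlet_energy n d A (Z \<omega>) =
     1/2 * (\<Sum>i<n. \<Sum>j<n. A i j * (\<Sum>l<d. (\<Sum>k<n. V i j l k * X k l \<omega>)\<^sup>2))" for \<omega>
    unfolding dirichlet_energy_def V_def
    by (intro arg_cong[where f="\<lambda>x. 1/2 * x"] sum.cong refl arg_cong[where f="\<lambda>x. A _ _ * x"])
       (simp add: Z sum_divide_distrib sum_subtractf[symmetric] left_diff_distrib)
  have int: "integrable M (\<lambda>\<omega>. (\<Sum>k<n. V i j l k * X k l \<omega>)\<^sup>2)" if "l < d" for i j l
    using ortho[OF that] by (rule integrable_square_orthonormal_comb)
  have int_pair: "integrable M (\<lambda>\<omega>. A i j * (\<Sum>l<d. (\<Sum>k<n. V i j l k * X k l \<omega>)\<^sup>2))"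
    for i j using int by (intro integrable_mult_right Bochner_Integration.integrable_sum) auto
  have "integral\<^sup>L M (\<lambda>\<omega>. dirichlet_energy n d A (Z \<omega>)) =
     1/2 * (\<Sum>i<n. \<Sum>j<n. integral\<^sup>L M (\<lambda>\<omega>. A i j * (\<Sum>l<d. (\<Sum>k<n. V i j l k * X k l \<omega>)\<^sup>2)))"
    unfolding energy using int_pair
    by (simp add: Bochner_Integration.integral_sum Bochner_Integration.integrable_sum)
  also have "\<dots> =
     1/2 * (\<Sum>i<n. \<Sum>j<n. A i j * (\<Sum>l<d. integral\<^sup>L M (\<lambda>\<omega>. (\<Sum>k<n. V i j l k * X k l \<omega>)\<^sup>2)))"
    using int by (simp add: Bochner_Integration.integral_sum)
  also have "\<dots> = 1/2 * (\<Sum>i<n. \<Sum>j<n. A i j * (\<Sum>l<d. \<Sum>k<n. (V i j l k)\<^sup>2))"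
    using ortho by (simp add: integral_square_orthonormal_comb)
  finally show ?thesis unfolding V_def .
qed

lemma square_diff_le_of_unit_interval:
  fixes a b u v :: real
  assumes "0 \<le> a" "0 \<le> b" "0 \<le> u" "u \<le> 1" "0 \<le> v" "v \<le> 1"
  shows "(u * a - v * b)\<^sup>2 \<le> u * a\<^sup>2 + v * b\<^sup>2"
proof -
  have "u\<^sup>2 * a\<^sup>2 \<le> u * a\<^sup>2" "v\<^sup>2 * b\<^sup>2 \<le> v * b\<^sup>2"
    using assms by (simp_all add: power2_eq_square mult_left_le mult_right_mono)
  moreover have "0 \<le> u * v * a * b" using assms by simp
  ultimately show ?thesis by (simp add: power2_eq_square algebra_simps)
qed

lemma sum_square_diff_prob_vectors_le:
  fixes u v :: "'i \<Rightarrow> real" and p q :: real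
  assumes "finite K" "0 \<le> p" "0 \<le> q"
    and u: "\<And>k. k \<in> K \<Longrightarrow> 0 \<le> u k" "sum u K = 1"
    and v: "\<And>k. k \<in> K \<Longrightarrow> 0 \<le> v k" "sum v K = 1"
  shows "(\<Sum>k\<in>K. (u k / p - v k / q)\<^sup>2) \<le> (1 / p)\<^sup>2 + (1 / q)\<^sup>2"
proof -
  have le1: "u k \<le> 1" "v k \<le> 1" if "k \<in> K" for k
    using member_le_sum[of k K u] member_le_sum[of k K v] assms that by auto
  have "(\<Sum>k\<in>K. (u k / p - v k / q)\<^sup>2) \<le> (\<Sum>k\<in>K. u k * (1 / p)\<^sup>2 + v k * (1 / q)\<^sup>2)"
    using assms le1
    by (intro sum_mono) (simp add: square_diff_le_of_unit_interval[of "1 / p" "1 / q", simplified])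
  also have "\<dots> = (1 / p)\<^sup>2 + (1 / q)\<^sup>2"
    using u v by (simp add: sum.distrib sum_distrib_right[symmetric])
  finally show ?thesis .
qed

lemma sum_square_diff_unit_vectors:
  fixes p q :: real
  assumes "finite K" "i \<in> K" "j \<in> K" "i \<noteq> j"
  shows "(\<Sum>k\<in>K. ((if k = i then 1 else 0) / p - (if k = j then 1 else 0) / q)\<^sup>2)
    = (1 / p)\<^sup>2 + (1 / q)\<^sup>2"
proof -
  have "(\<Sum>k\<in>K. ((if k = i then 1 else 0) / p - (if k = j then 1 else 0) / q)\<^sup>2)
      = (\<Sum>k\<in>K. (if k = i then (1 / p)\<^sup>2 else 0) + (if k = j then (1 / q)\<^sup>2 else 0))"
    using assms by (intro sum.cong refl) auto
  also have "\<dots> = (1 / p)\<^sup>2 + (1 / q)\<^sup>2"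
    using assms by (simp add: sum.distrib)
  finally show ?thesis .
qed

lemma degree_nonneg: "is_adjacency n A \<Longrightarrow> i < n \<Longrightarrow> 0 \<le> degree n A i"
  unfolding is_adjacency_def degree_def by (auto intro: sum_nonneg)

definition imputation_weight ::
    "nat \<Rightarrow> (nat \<Rightarrow> nat \<Rightarrow> bool) \<Rightarrow> (nat \<Rightarrow> nat \<Rightarrow> nat \<Rightarrow> real) \<Rightarrow> nat \<Rightarrow> nat \<Rightarrow> nat \<Rightarrow> real"
  where "imputation_weight n Mk alpha i j k =
     (if Mk i j then (if k = i then 1 else 0)
      else if k \<in> obs_set n Mk j then alpha i j k else 0)"

lemma sum_lessThan_restrict_obs_set:
  "(\<Sum>k<n. if k \<in> obs_set n Mk j then f k else 0) = sum f (obs_set n Mk j)"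
proof -
  have "{..<n} \<inter> obs_set n Mk j = obs_set n Mk j" unfolding obs_set_def by auto
  then show ?thesis by (simp add: sum.inter_restrict[symmetric])
qed

lemma imputed_eq_sum_imputation_weight:
  assumes "i < n"
  shows "imputed n Mk alpha X i j = (\<Sum>k<n. imputation_weight n Mk alpha i j k * X k j)"
proof -
  have "imputation_weight n Mk alpha i j k * X k j =
      (if Mk i j then (if k = i then X k j else 0)
       else if k \<in> obs_set n Mk j then alpha i j k * X k j else 0)" for k
    by (simp add: imputation_weight_def)
  then show ?thesis
    using assms sum_lessThan_restrict_obs_set[of n Mk j "\<lambda>k. alpha i j k * X k j"]
    by (simp add: imputed_def)
qed

lemma imputation_weight_nonneg:
  assumes "\<not> Mk i j \<Longrightarrow> \<forall>k\<in>obs_set n Mk j. 0 \<le> alpha i j k"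
  shows "0 \<le> imputation_weight n Mk alpha i j k"
  using assms by (simp add: imputation_weight_def)

lemma sum_imputation_weight:
  assumes "i < n" and "\<not> Mk i j \<Longrightarrow> sum (alpha i j) (obs_set n Mk j) = 1"
  shows "(\<Sum>k<n. imputation_weight n Mk alpha i j k) = 1"
  using assms sum_lessThan_restrict_obs_set[of n Mk j "alpha i j"]
  by (cases "Mk i j") (simp_all add: imputation_weight_def)

lemma sum_square_diff_imputation_weight_le:
  fixes p q :: real
  assumes "i < n" "j < n" "i \<noteq> j" "0 \<le> p" "0 \<le> q"
    and "\<And>r. r < n \<Longrightarrow> \<not> Mk r l \<Longrightarrow> \<forall>k\<in>obs_set n Mk l. 0 \<le> alpha r l k"
    and "\<And>r. r < n \<Longrightarrow> \<not> Mk r l \<Longrightarrow> sum (alpha r l) (obs_set n Mk l) = 1"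
  shows "(\<Sum>k<n. (imputation_weight n Mk alpha i l k / p - imputation_weight n Mk alpha j l k / q)\<^sup>2)
    \<le> (\<Sum>k<n. ((if k = i then 1 else 0) / p - (if k = j then 1 else 0) / q)\<^sup>2)"
proof -
  have "(\<Sum>k<n. (imputation_weight n Mk alpha i l k / p - imputation_weight n Mk alpha j l k / q)\<^sup>2)
      \<le> (1 / p)\<^sup>2 + (1 / q)\<^sup>2"
    using assms by (intro sum_square_diff_prob_vectors_le imputation_weight_nonneg sum_imputation_weight) auto
  also have "\<dots> = (\<Sum>k<n. ((if k = i then 1 else 0) / p - (if k = j then 1 else 0) / q)\<^sup>2)"
    using assms by (simp add: sum_square_diff_unit_vectors)
  finally show ?thesis .
qed

theorem proposition3p2:
  fixes n d :: nat
    and A :: "nat \<Rightarrow> nat \<Rightarrow> real"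
    and Mk :: "nat \<Rightarrow> nat \<Rightarrow> bool"
    and alpha :: "nat \<Rightarrow> nat \<Rightarrow> nat \<Rightarrow> real"
    and M :: "'a measure"
    and X :: "nat \<Rightarrow> nat \<Rightarrow> 'a \<Rightarrow> real"
  assumes adj: "is_adjacency n A"
    and cols_observed: "\<forall>j<d. obs_set n Mk j \<noteq> {}"
    and weights_nonneg: "\<forall>i<n. \<forall>j<d. \<not> Mk i j \<longrightarrow> (\<forall>k\<in>obs_set n Mk j. 0 \<le> alpha i j k)"
    and weights_sum: "\<forall>i<n. \<forall>j<d. \<not> Mk i j \<longrightarrow> (\<Sum>k\<in>obs_set n Mk j. alpha i j k) = 1"
    and prob: "prob_space M"
    and rv: "\<forall>i<n. \<forall>j<d. X i j \<in> borel_measurable M"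
    and indep: "prob_space.indep_vars M (\<lambda>_. borel) (\<lambda>(i, j). X i j) ({..<n} \<times> {..<d})"
    and ident: "\<forall>i<n. \<forall>j<d. \<forall>i'<n. \<forall>j'<d. distr M borel (X i j) = distr M borel (X i' j')"
    and integrable: "\<forall>i<n. \<forall>j<d. integrable M (X i j)"
    and sq_integrable: "\<forall>i<n. \<forall>j<d. integrable M (\<lambda>\<omega>. (X i j \<omega>)\<^sup>2)"
    and mean0: "\<forall>i<n. \<forall>j<d. integral\<^sup>L M (X i j) = 0"
    and var1: "\<forall>i<n. \<forall>j<d.
                 integral\<^sup>L M (\<lambda>\<omega>. (X i j \<omega> - integral\<^sup>L M (X i j))\<^sup>2) = 1"
  shows "integral\<^sup>L M (\<lambda>\<omega>. dirichlet_energy n d A (imputed n Mk alpha (\<lambda>i j. X i j \<omega>)))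
         \<le> integral\<^sup>L M (\<lambda>\<omega>. dirichlet_energy n d A (\<lambda>i j. X i j \<omega>))"
proof -
  interpret prob_space M by (rule prob)
  have "orthonormal M (\<lambda>(i, j). X i j) ({..<n} \<times> {..<d})"
    using integrable sq_integrable mean0 var1
    by (intro orthonormal_if_indep_standardized[OF indep]) auto
  then have ortho: "orthonormal M (\<lambda>k. X k l) {..<n}" if "l < d" for l
    using orthonormal_reindex[of M "\<lambda>(i, j). X i j" _ "\<lambda>k. (k, l)" "{..<n}"] that
    by (auto simp: inj_on_def)
  define s where "s i = sqrt (1 + degree n A i)" for i
  define w where "w = imputation_weight n Mk alpha"
  have energy_imputed:
    "integral\<^sup>L M (\<lambda>\<omega>. dirichlet_energy n d A (imputed n Mk alpha (\<lambda>i j. X i j \<omega>))) =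
     1/2 * (\<Sum>i<n. \<Sum>j<n. A i j * (\<Sum>l<d. \<Sum>k<n. (w i l k / s i - w j l k / s j)\<^sup>2))"
    unfolding s_def w_def
    by (rule integral_dirichlet_energy_orthonormal_columns) (simp_all add: ortho imputed_eq_sum_imputation_weight)
  have energy:
    "integral\<^sup>L M (\<lambda>\<omega>. dirichlet_energy n d A (\<lambda>i j. X i j \<omega>)) =
     1/2 * (\<Sum>i<n. \<Sum>j<n. A i j * (\<Sum>l<d. \<Sum>k<n.
        ((if k = i then 1 else 0) / s i - (if k = j then 1 else 0) / s j)\<^sup>2))"
    unfolding s_def
    by (rule integral_dirichlet_energy_orthonormal_columns[where X = X])
       (simp_all add: ortho if_distrib[of "\<lambda>c. c * X _ _ _"] cong: if_cong)
  have edge_weight: "A i j * (\<Sum>l<d. \<Sum>k<n. (w i l k / s i - w j l k / s j)\<^sup>2)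
      \<le> A i j * (\<Sum>l<d. \<Sum>k<n. ((if k = i then 1 else 0) / s i - (if k = j then 1 else 0) / s j)\<^sup>2)"
    if "i < n" "j < n" for i j
  proof (cases "i = j")
    case False
    have "(\<Sum>l<d. \<Sum>k<n. (w i l k / s i - w j l k / s j)\<^sup>2)
        \<le> (\<Sum>l<d. \<Sum>k<n. ((if k = i then 1 else 0) / s i - (if k = j then 1 else 0) / s j)\<^sup>2)"
      unfolding w_def s_def
      by (rule sum_mono, rule sum_square_diff_imputation_weight_le)
         (use that False adj weights_nonneg weights_sum in \<open>auto simp: degree_nonneg\<close>)
    then show ?thesis using adj that unfolding is_adjacency_def by (simp add: mult_left_mono)
  qed (use adj that in \<open>simp add: is_adjacency_def\<close>)
  show ?thesis unfolding energy_imputed energy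
    by (rule mult_left_mono[OF sum_mono[OF sum_mono]]) (simp_all add: edge_weight del: sum_constant)
qed

end
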